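(* For all integers $s,l\ge 0$, as $n\to\infty$, \[ \left\langle S_{2,n}^l\left(S_{2,n}-\frac{n}{4}\right)^{2s}\right\rangle\sim\left(\frac{n}{4}\right)^l\frac{(2s-1)!!}{4^{2s}}n^s,\qquad \left\langle S_{2,n}^l\left(S_{2,n}-\frac{n}{4}\right)^{2s+1}\right\rangle\sim\left(\frac{n}{4}\right)^l\frac{(2s+1)!!}{2\cdot 4^{2s+1}}(2l+1)\,n^s. \]
   Context: For $n\ge 1$, let $\Omega_n$ be the set of rooted plane (ordered) full binary trees with $n$ leaves (every internal node has exactly two children, left and right distinguished). The random model is $\Omega_n$ with the uniform probability measure $P_n$; $\langle\cdot\rangle$ denotes expectation with respect to $P_n$. Horton–Strahler ordering: every leaf has order 1; an internal node whose two children have different orders $r_1\neq r_2$ has order $\max\{r_1,r_2\}$; an internal node whose two children both have order $r$ has order $r+1$. A branch of order $r$ is a maximal connected path consisting of nodes all of order $r$. $S_{2,n}(\tau)$ is the number of branches of order $2$ in $\tau\in\Omega_n$. For sequences, $a_n\sim b_n$ means $\lim_{n\to\infty}a_n/b_n=1$. Convention: $(-1)!!=1$. *)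

theory Defs
  imports Complex_Main "HOL-Library.Landau_Symbols"
begin

datatype btree = Leaf | Node btree btree

fun leaves :: "btree \<Rightarrow> nat" where
  "leaves Leaf = 1"
| "leaves (Node l r) = leaves l + leaves r"

definition Omega :: "nat \<Rightarrow> btree set" where
  "Omega n = {t. leaves t = n}"

fun hs :: "btree \<Rightarrow> nat" where
  "hs Leaf = 1"
| "hs (Node l r) = (if hs l = hs r then hs l + 1 else max (hs l) (hs r))"

text \<open>Nodes of order k form vertex-disjoint downward paths (a node never has two
children of its own order).  A branch of order k is a maximal such path, so it is
identified by its top node: a node of order k that is the root or whose parent has
order different from k.  branch_tops k t counts such top nodes strictly below the root.\<close>
fun branch_tops :: "nat \<Rightarrow> btree \<Rightarrow> nat" where
  "branch_tops k Leaf = 0"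
| "branch_tops k (Node l r) =
     (if hs l = k \<and> hs (Node l r) \<noteq> k then 1 else 0)
   + (if hs r = k \<and> hs (Node l r) \<noteq> k then 1 else 0)
   + branch_tops k l + branch_tops k r"

definition branches :: "nat \<Rightarrow> btree \<Rightarrow> nat" where
  "branches k t = (if hs t = k then 1 else 0) + branch_tops k t"

definition S2 :: "btree \<Rightarrow> nat" where
  "S2 t = branches 2 t"

definition expect :: "nat \<Rightarrow> (btree \<Rightarrow> real) \<Rightarrow> real" where
  "expect n f = (\<Sum>t\<in>Omega n. f t) / real (card (Omega n))"

text \<open>Double factorial; dfact 0 = 1, so (2s-1)!! with truncated nat subtraction
gives (-1)!! = 1 at s = 0.\<close>
fun dfact :: "nat \<Rightarrow> nat" where
  "dfact 0 = 1"
| "dfact (Suc 0) = 1"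
| "dfact (Suc (Suc n)) = Suc (Suc n) * dfact n"

end

theory Submission
  imports Defs "HOL-Real_Asymp.Real_Asymp"
begin

text \<open>S_{2,n} counts cherries (internal nodes with two leaf children).  Splitting at the root and
  using Vandermonde's identity gives the binomial moments of the cherry count in closed form,
  hence a one-step ratio between consecutive falling-factorial moments.  Equivalently, writing k
  for the cherry count, the sum over all trees of 4k(k-1) f(k-1) - (n-2k)(n-2k-1) f(k) vanishes
  for every polynomial f.  Applied to f(x) = (x - n/4)^m this yields a recurrence for the central
  moments M_m, from which strong induction on m gives M_{2s} ~ (2s-1)!! n^s / 16^s and
  M_{2s+1} ~ (2s+1)!! n^s / (8 * 16^s).  Finally, with D = S - n/4, the factor S^l = (D + n/4)^l
  is expanded binomially; at order n^(l+s) only the moment M_k survives, together with M_(k+1)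
  when k is odd.\<close>

lemma leaves_ge_1: "leaves t \<ge> 1"
  by (induction t) auto

lemma Omega_0 [simp]: "Omega 0 = {}"
proof -
  have "leaves t \<noteq> 0" for t using leaves_ge_1[of t] by simp
  then show ?thesis by (auto simp: Omega_def)
qed

lemma Omega_Suc_0 [simp]: "Omega (Suc 0) = {Leaf}"
proof -
  have "t = Leaf" if "leaves t = 1" for t
  proof (cases t)
    case (Node l r)
    with that leaves_ge_1[of l] leaves_ge_1[of r] show ?thesis by simp
  qed
  then show ?thesis by (auto simp: Omega_def)
qed

lemma Omega_split:
  assumes "n \<ge> 2"
  shows "Omega n = (\<Union>p\<in>{1..<n}. (\<lambda>(l, r). Node l r) ` (Omega p \<times> Omega (n - p)))"
proof safe
  fix t assume t: "t \<in> Omega n"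
  with assms obtain l r where "t = Node l r" by (cases t) (auto simp: Omega_def)
  then show "t \<in> (\<Union>p\<in>{1..<n}. (\<lambda>(l, r). Node l r) ` (Omega p \<times> Omega (n - p)))"
    using t leaves_ge_1[of l] leaves_ge_1[of r]
    by (auto simp: Omega_def intro!: bexI[of _ "leaves l"] image_eqI[of _ _ "(l, r)"])
qed (auto simp: Omega_def)

lemma Omega_2: "Omega 2 = {Node Leaf Leaf}"
proof -
  have "{1..<2::nat} = {1}" by auto
  then show ?thesis by (simp add: Omega_split)
qed

lemma finite_Omega: "finite (Omega n)"
proof (induction n rule: less_induct)
  case (less n)
  show ?case
  proof (cases "n \<ge> 2")
    case True
    show ?thesis unfolding Omega_split[OF True]
      by (intro finite_UN_I finite_imageI finite_cartesian_product less.IH) auto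
  next
    case False
    then have "n = 0 \<or> n = 1" by auto
    then show ?thesis by auto
  qed
qed

lemma sum_Omega_split:
  assumes "n \<ge> 2"
  shows "(\<Sum>t\<in>Omega n. g t) = (\<Sum>p\<in>{1..<n}. \<Sum>l\<in>Omega p. \<Sum>r\<in>Omega (n - p). g (Node l r))"
proof -
  have "(\<Sum>t\<in>Omega n. g t)
      = (\<Sum>p\<in>{1..<n}. \<Sum>t\<in>(\<lambda>(l, r). Node l r) ` (Omega p \<times> Omega (n - p)). g t)"
    unfolding Omega_split[OF assms]
    by (rule sum.UNION_disjoint) (use finite_Omega in \<open>auto simp: Omega_def\<close>)
  also have "\<dots> = (\<Sum>p\<in>{1..<n}. \<Sum>(l, r)\<in>Omega p \<times> Omega (n - p). g (Node l r))"
    by (intro sum.cong refl, subst sum.reindex) (auto simp: inj_on_def case_prod_unfold)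
  finally show ?thesis
    by (simp add: sum.cartesian_product finite_Omega)
qed

fun cherries :: "btree \<Rightarrow> nat" where
  "cherries Leaf = 0"
| "cherries (Node l r) = (if l = Leaf \<and> r = Leaf then 1 else cherries l + cherries r)"

lemma hs_ge_1: "hs t \<ge> 1"
  by (induction t) auto

lemma hs_eq_1_iff: "hs t = 1 \<longleftrightarrow> t = Leaf"
proof (cases t)
  case (Node l r)
  then show ?thesis using hs_ge_1[of l] hs_ge_1[of r] by auto
qed simp

text \<open>A branch of order 2 ends in a node of order 2 both of whose children are leaves,
  and every such cherry ends exactly one branch.\<close>
lemma branches_2_eq_cherries: "branches 2 t = cherries t"
proof (induction t)
  case (Node l r)
  then show ?case
    using hs_ge_1[of l] hs_ge_1[of r] hs_eq_1_iff[of l] hs_eq_1_iff[of r]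
    by (auto simp: branches_def split: if_splits)
qed (simp add: branches_def)

lemma S2_eq_cherries: "S2 t = cherries t"
  by (simp add: S2_def branches_2_eq_cherries)

abbreviation ntrees :: "nat \<Rightarrow> nat" where
  "ntrees n \<equiv> card (Omega n)"

lemma ntrees_conv: "n \<ge> 2 \<Longrightarrow> ntrees n = (\<Sum>p\<in>{1..<n}. ntrees p * ntrees (n - p))"
  using sum_Omega_split[of n "\<lambda>_. 1::nat"] by simp

lemma sum_reflect: "(\<Sum>p\<in>{1..<n}. h p (n - p)) = (\<Sum>p\<in>{1..<n::nat}. h (n - p) p)"
  by (rule sum.reindex_bij_witness[of _ "\<lambda>p. n - p" "\<lambda>p. n - p"]) auto

lemma ntrees_conv_weighted:
  fixes w :: "nat \<Rightarrow> real"
  assumes "n \<ge> 2" and "\<And>p. p < n \<Longrightarrow> w p + w (n - p) = 2 * a"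
  shows "(\<Sum>p\<in>{1..<n}. w p * ntrees p * ntrees (n - p)) = a * real (ntrees n)"
proof -
  let ?c = "\<lambda>p. real (ntrees p)"
  have "2 * (\<Sum>p\<in>{1..<n}. w p * ?c p * ?c (n - p))
      = (\<Sum>p\<in>{1..<n}. w p * ?c p * ?c (n - p)) + (\<Sum>p\<in>{1..<n}. w (n - p) * ?c (n - p) * ?c p)"
    using sum_reflect[of "\<lambda>p q. w p * ?c p * ?c q" n] by simp
  also have "\<dots> = (\<Sum>p\<in>{1..<n}. 2 * a * (?c p * ?c (n - p)))"
    unfolding sum.distrib[symmetric]
  proof (intro sum.cong refl)
    fix p assume "p \<in> {1..<n}"
    then have "w p + w (n - p) = 2 * a" using assms(2) by simp
    then show "w p * ?c p * ?c (n - p) + w (n - p) * ?c (n - p) * ?c p = 2 * a * (?c p * ?c (n - p))"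
      by (metis (no_types, lifting) distrib_right mult.commute mult.left_commute)
  qed
  also have "\<dots> = 2 * a * ?c n"
    using ntrees_conv[OF assms(1)] by (simp flip: sum_distrib_left)
  finally show ?thesis by simp
qed

lemma ntrees_ratio:
  assumes "n \<ge> 2"
  shows "real n * ntrees n = 2 * (2 * real n - 3) * ntrees (n - 1)"
  using assms
proof (induction n rule: less_induct)
  case (less n)
  let ?c = "\<lambda>p. real (ntrees p)"
  show ?case
  proof (cases "n = 2")
    case True
    then show ?thesis by (simp add: Omega_2)
  next
    case False
    with less.prems obtain m where n: "n = Suc m" and m2: "m \<ge> 2"
      by (metis Suc_le_D le_antisym not_less_eq_eq numeral_2_eq_2)
    have "(\<Sum>p\<in>{1..<n}. real p * ?c p * ?c (n - p)) = real n / 2 * ?c n"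
      by (rule ntrees_conv_weighted) (use n m2 in auto)
    then have "real n * ?c n = 2 * (\<Sum>p\<in>{1..<n}. real p * ?c p * ?c (n - p))"
      by simp
    also have "(\<Sum>p\<in>{1..<n}. real p * ?c p * ?c (n - p))
        = ?c m + (\<Sum>q\<in>{1..<m}. real (Suc q) * ?c (Suc q) * ?c (m - q))"
      using m2 unfolding n
      by (subst sum.atLeast_Suc_lessThan) (simp_all del: sum.op_ivl_Suc add: sum.atLeast_Suc_lessThan_Suc_shift)
    also have "(\<Sum>q\<in>{1..<m}. real (Suc q) * ?c (Suc q) * ?c (m - q))
        = (\<Sum>q\<in>{1..<m}. 2 * (2 * real q - 1) * ?c q * ?c (m - q))"
    proof (intro sum.cong refl)
      fix q assume "q \<in> {1..<m}"
      then have "real (Suc q) * ?c (Suc q) = 2 * (2 * real q - 1) * ?c q"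
        using less.IH[of "Suc q"] n by (simp add: algebra_simps)
      then show "real (Suc q) * ?c (Suc q) * ?c (m - q) = 2 * (2 * real q - 1) * ?c q * ?c (m - q)"
        by simp
    qed
    also have "\<dots> = 2 * (real m - 1) * ?c m"
      by (rule ntrees_conv_weighted) (use m2 in \<open>auto simp: of_nat_diff algebra_simps\<close>)
    finally show ?thesis by (simp add: n algebra_simps)
  qed
qed

lemma ntrees_pos: "n \<ge> 1 \<Longrightarrow> ntrees n > 0"
proof (induction n rule: nat_induct_at_least)
  case (Suc n)
  then have "real (Suc n) * ntrees (Suc n) = 2 * (2 * real n - 1) * ntrees n"
    using ntrees_ratio[of "Suc n"] by (simp add: algebra_simps)
  moreover have "2 * (2 * real n - 1) * ntrees n > 0"
    using Suc by simp
  ultimately show ?case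
    by (metis mult_zero_right of_nat_0 gr0I less_irrefl)
qed simp

section \<open>Binomial moments of the number of cherries\<close>

lemma sum_conv_shift:
  fixes f g :: "nat \<Rightarrow> 'a::semiring_0"
  assumes f0: "f 0 = 0" and g0: "g 0 = 0"
  shows "(\<Sum>p\<in>{1..<n}. f (p - i) * g (n - p - k)) = (\<Sum>q<n - i - k. f q * g (n - i - k - q))"
proof -
  let ?F = "\<lambda>p. f (p - i) * g (n - p - k)"
  have "(\<Sum>p\<in>{1..<n}. ?F p) = (\<Sum>p\<in>{i..<n}. ?F p)"
    by (intro sum.mono_neutral_cong) (auto simp: f0)
  also have "\<dots> = (\<Sum>q<n - i. ?F (q + i))"
    by (simp add: sum.atLeastLessThan_shift_0[of _ i n] lessThan_atLeast0 add.commute)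
  also have "\<dots> = (\<Sum>q<n - i - k. f q * g (n - i - k - q))"
    by (intro sum.mono_neutral_cong_right) (auto simp: g0 add_ac)
  finally show ?thesis .
qed

definition marked_trees :: "nat \<Rightarrow> nat \<Rightarrow> nat" where
  "marked_trees m i = (m choose i) * ntrees m"

lemma marked_trees_0 [simp]: "marked_trees 0 i = 0"
  by (simp add: marked_trees_def)

lemma marked_trees_conv:
  assumes "m \<ge> 2"
  shows "(\<Sum>q<m. \<Sum>i\<le>j. marked_trees q i * marked_trees (m - q) (j - i)) = marked_trees m j"
proof -
  have "(\<Sum>q\<in>{1..<m}. ntrees q * ntrees (m - q)) = (\<Sum>q<m. ntrees q * ntrees (m - q))"
    by (intro sum.mono_neutral_left) (auto simp: Suc_le_eq)
  then have "marked_trees m j = (m choose j) * (\<Sum>q<m. ntrees q * ntrees (m - q))"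
    using ntrees_conv[OF assms] by (simp add: marked_trees_def)
  also have "\<dots> = (\<Sum>q<m. \<Sum>i\<le>j. marked_trees q i * marked_trees (m - q) (j - i))"
    unfolding sum_distrib_left
  proof (intro sum.cong refl)
    fix q assume "q \<in> {..<m}"
    then have "m choose j = (\<Sum>i\<le>j. (q choose i) * ((m - q) choose (j - i)))"
      using vandermonde[of q "m - q" j] by simp
    then show "(m choose j) * (ntrees q * ntrees (m - q))
        = (\<Sum>i\<le>j. marked_trees q i * marked_trees (m - q) (j - i))"
      by (simp add: marked_trees_def sum_distrib_left sum_distrib_right mult_ac)
  qed
  finally show ?thesis ..
qed

lemma marked_trees_split_conv:
  assumes "n \<ge> 3"
  shows "(\<Sum>p\<in>{1..<n}. \<Sum>i\<le>j. marked_trees (p - i) i * marked_trees (n - p - (j - i)) (j - i))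
    = marked_trees (n - j) j"
proof -
  have "(\<Sum>p\<in>{1..<n}. \<Sum>i\<le>j. marked_trees (p - i) i * marked_trees (n - p - (j - i)) (j - i))
      = (\<Sum>i\<le>j. \<Sum>p\<in>{1..<n}. marked_trees (p - i) i * marked_trees (n - p - (j - i)) (j - i))"
    by (rule sum.swap)
  also have "\<dots> = (\<Sum>i\<le>j. \<Sum>q<n - j. marked_trees q i * marked_trees (n - j - q) (j - i))"
  proof (rule sum.cong[OF refl])
    fix i assume "i \<in> {..j}"
    then have "n - i - (j - i) = n - j" by auto
    then show "(\<Sum>p\<in>{1..<n}. marked_trees (p - i) i * marked_trees (n - p - (j - i)) (j - i))
        = (\<Sum>q<n - j. marked_trees q i * marked_trees (n - j - q) (j - i))"
      using sum_conv_shift[of "\<lambda>q. marked_trees q i" "\<lambda>q. marked_trees q (j - i)" i n "j - i"]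
      by simp
  qed
  also have "\<dots> = marked_trees (n - j) j"
  proof (cases "n - j \<ge> 2")
    case True
    then show ?thesis by (subst sum.swap) (rule marked_trees_conv)
  next
    case False
    with assms have "n - j = 0 \<or> (n - j = 1 \<and> j \<ge> 2)" by auto
    then show ?thesis by (auto simp: marked_trees_def)
  qed
  finally show ?thesis .
qed

lemma sum_sum_choose_add:
  "(\<Sum>x\<in>A. \<Sum>y\<in>B. (f x + g y) choose j)
    = (\<Sum>i\<le>j. (\<Sum>x\<in>A. f x choose i) * (\<Sum>y\<in>B. g y choose (j - i)))"
proof -
  have "(\<Sum>x\<in>A. \<Sum>y\<in>B. (f x + g y) choose j)
      = (\<Sum>x\<in>A. \<Sum>y\<in>B. \<Sum>i\<le>j. (f x choose i) * (g y choose (j - i)))"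
    by (simp add: vandermonde)
  also have "\<dots> = (\<Sum>i\<le>j. \<Sum>x\<in>A. \<Sum>y\<in>B. (f x choose i) * (g y choose (j - i)))"
    by (subst sum.swap, subst (2) sum.swap) simp
  finally show ?thesis
    by (simp add: sum_product)
qed

text \<open>Contracting j chosen cherries to leaves gives a tree with n - j leaves, j of them marked.\<close>
lemma sum_cherries_choose: "(\<Sum>t\<in>Omega n. cherries t choose j) = marked_trees (n - j) j"
proof (induction n arbitrary: j rule: less_induct)
  case (less n)
  consider "n \<le> 1" | "n = 2" | "n \<ge> 3" by linarith
  then show ?case
  proof cases
    case 1
    then have "n = 0 \<or> n = 1" by auto
    then show ?thesis by (cases "j = 0") (auto simp: marked_trees_def)
  next
    case 2
    moreover have "j = 0 \<or> j = 1 \<or> j \<ge> 2" by auto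
    ultimately show ?thesis by (auto simp: Omega_2 marked_trees_def)
  next
    case 3
    have "(\<Sum>t\<in>Omega n. cherries t choose j)
        = (\<Sum>p\<in>{1..<n}. \<Sum>l\<in>Omega p. \<Sum>r\<in>Omega (n - p). cherries (Node l r) choose j)"
      using 3 by (intro sum_Omega_split) simp
    also have "\<dots> = (\<Sum>p\<in>{1..<n}. \<Sum>l\<in>Omega p. \<Sum>r\<in>Omega (n - p). (cherries l + cherries r) choose j)"
      using 3 by (intro sum.cong refl) (auto simp: Omega_def)
    also have "\<dots> = (\<Sum>p\<in>{1..<n}. \<Sum>i\<le>j. marked_trees (p - i) i * marked_trees (n - p - (j - i)) (j - i))"
      using 3 by (simp add: sum_sum_choose_add less.IH)
    also have "\<dots> = marked_trees (n - j) j"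
      using 3 by (rule marked_trees_split_conv)
    finally show ?thesis .
  qed
qed

section \<open>Falling factorial moments and a Stein identity\<close>

fun ffact :: "nat \<Rightarrow> real \<Rightarrow> real" where
  "ffact 0 x = 1"
| "ffact (Suc j) x = ffact j x * (x - real j)"

declare ffact.simps(2) [simp del]

lemma Suc_mult_choose_Suc: "(k choose Suc j) * Suc j = (k choose j) * (k - j)"
proof (cases k)
  case (Suc k')
  then have "(k choose Suc j) * Suc j = Suc k' * (k' choose j)"
    using Suc_times_binomial[of j k'] by (simp add: mult.commute)
  also have "\<dots> = (k choose j) * (k - j)"
    using binomial_absorb_comp[of k j] Suc by (simp add: mult.commute)
  finally show ?thesis .
qed simp

lemma ffact_of_nat: "ffact j (real k) = fact j * real (k choose j)"
proof (induction j)
  case (Suc j)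
  have "real ((k choose Suc j) * Suc j) = real ((k choose j) * (k - j))"
    by (simp only: Suc_mult_choose_Suc)
  then have e: "real (k choose Suc j) * (real j + 1) = real (k choose j) * real (k - j)"
    by (simp only: of_nat_mult of_nat_Suc add.commute)
  show ?case
  proof (cases "j \<le> k")
    case True
    then have "ffact (Suc j) (real k) = fact j * (real (k choose j) * real (k - j))"
      using Suc by (simp add: ffact.simps of_nat_diff)
    also have "\<dots> = fact (Suc j) * real (k choose Suc j)"
      by (simp flip: e add: algebra_simps)
    finally show ?thesis .
  qed (simp add: Suc ffact.simps binomial_eq_0)
qed simp

lemma ffact_Suc_shift: "x * ffact j (x - 1) = ffact (Suc j) x"
proof (induction j)
  case (Suc j)
  have "x * ffact (Suc j) (x - 1) = x * ffact j (x - 1) * (x - 1 - real j)"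
    by (simp add: ffact.simps mult.assoc)
  also have "\<dots> = ffact (Suc (Suc j)) x"
    by (simp add: Suc.IH ffact.simps algebra_simps)
  finally show ?case .
qed (simp add: ffact.simps)

lemma sum_ffact_cherries:
  "(\<Sum>t\<in>Omega n. ffact j (real (cherries t))) = ffact j (real (n - j)) * ntrees (n - j)"
proof -
  have "(\<Sum>t\<in>Omega n. ffact j (real (cherries t))) = fact j * real (\<Sum>t\<in>Omega n. cherries t choose j)"
    by (simp add: ffact_of_nat sum_distrib_left)
  then show ?thesis
    by (simp add: sum_cherries_choose marked_trees_def ffact_of_nat)
qed

lemma sum_ffact_cherries_ratio:
  "2 * (2 * real n - 2 * real j - 3) * (\<Sum>t\<in>Omega n. ffact (Suc j) (real (cherries t)))
    = (real n - 2 * real j) * (real n - 2 * real j - 1) * (\<Sum>t\<in>Omega n. ffact j (real (cherries t)))"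
proof -
  consider "n \<le> j" | "n = j + 1" | "n \<ge> j + 2" by linarith
  then show ?thesis
  proof cases
    case 1
    then show ?thesis by (simp add: sum_ffact_cherries)
  next
    case 2
    have "ffact j (real 1) = 0 \<or> real n - 2 * real j = 0 \<or> real n - 2 * real j - 1 = 0"
      using 2 ffact_of_nat[of j 1] by (cases "j \<le> 1") (auto simp: binomial_eq_0)
    then show ?thesis using 2 by (auto simp: sum_ffact_cherries)
  next
    case 3
    define m where "m = n - j"
    have m2: "m \<ge> 2" and n: "n = m + j" and n_Suc: "n - Suc j = m - 1"
      using 3 by (auto simp: m_def)
    have ffact_m: "real m * ffact (Suc j) (real m - 1) = ffact j (real m) * (real m - real j) * (real m - real j - 1)"
      using ffact_Suc_shift[of "real m" "Suc j"] by (simp add: ffact.simps algebra_simps)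
    have "real m * (2 * (2 * real n - 2 * real j - 3) * (\<Sum>t\<in>Omega n. ffact (Suc j) (real (cherries t))))
        = 2 * (2 * real m - 3) * ntrees (m - 1) * (real m * ffact (Suc j) (real m - 1))"
      using m2 by (simp add: sum_ffact_cherries n_Suc n of_nat_diff algebra_simps)
    also have "\<dots> = real m * ntrees m * (ffact j (real m) * (real m - real j) * (real m - real j - 1))"
      using ntrees_ratio[OF m2] ffact_m by simp
    also have "\<dots> = real m * ((real n - 2 * real j) * (real n - 2 * real j - 1)
        * (\<Sum>t\<in>Omega n. ffact j (real (cherries t))))"
      by (simp add: sum_ffact_cherries m_def[symmetric] n algebra_simps)
    finally show ?thesis using m2 by simp
  qed
qed

definition stein :: "nat \<Rightarrow> (real \<Rightarrow> real) \<Rightarrow> real" where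
  "stein n f = (\<Sum>t\<in>Omega n. 4 * real (cherries t) * (real (cherries t) - 1) * f (real (cherries t) - 1)
      - (real n - 2 * real (cherries t)) * (real n - 2 * real (cherries t) - 1) * f (real (cherries t)))"

lemma stein_ffact: "stein n (ffact j) = 0"
proof -
  have pointwise: "4 * k * (k - 1) * ffact j (k - 1) - (real n - 2 * k) * (real n - 2 * k - 1) * ffact j k
      = (4 * real n - 4 * real j - 6) * ffact (Suc j) k
        - (real n - 2 * real j) * (real n - 2 * real j - 1) * ffact j k" for k :: real
  proof -
    have "4 * k * (k - 1) * ffact j (k - 1) = 4 * (k - 1) * (k * ffact j (k - 1))"
      by (simp add: algebra_simps)
    also have "\<dots> = 4 * (k - 1) * (k - real j) * ffact j k"
      by (simp add: ffact_Suc_shift ffact.simps)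
    finally show ?thesis by (simp add: ffact.simps algebra_simps)
  qed
  have "stein n (ffact j) = (4 * real n - 4 * real j - 6) * (\<Sum>t\<in>Omega n. ffact (Suc j) (real (cherries t)))
      - (real n - 2 * real j) * (real n - 2 * real j - 1) * (\<Sum>t\<in>Omega n. ffact j (real (cherries t)))"
    unfolding stein_def pointwise by (simp add: sum_subtractf sum_distrib_left)
  then show ?thesis
    using sum_ffact_cherries_ratio[of n j] by (simp add: algebra_simps)
qed

inductive_set ffact_span :: "(real \<Rightarrow> real) set" where
  ffact: "ffact j \<in> ffact_span"
| add: "f \<in> ffact_span \<Longrightarrow> g \<in> ffact_span \<Longrightarrow> (\<lambda>x. f x + g x) \<in> ffact_span"
| scale: "f \<in> ffact_span \<Longrightarrow> (\<lambda>x. c * f x) \<in> ffact_span"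

lemma stein_ffact_span: "f \<in> ffact_span \<Longrightarrow> stein n f = 0"
proof (induction rule: ffact_span.induct)
  case (ffact j)
  then show ?case by (rule stein_ffact)
next
  case (add f g)
  have "stein n (\<lambda>x. f x + g x) = stein n f + stein n g"
    unfolding stein_def by (simp add: sum.distrib[symmetric] algebra_simps)
  then show ?case using add by simp
next
  case (scale f c)
  have "stein n (\<lambda>x. c * f x) = c * stein n f"
    unfolding stein_def by (simp add: sum_distrib_left algebra_simps)
  then show ?case using scale by simp
qed

lemma ffact_span_mult_x: "f \<in> ffact_span \<Longrightarrow> (\<lambda>x. x * f x) \<in> ffact_span"
proof (induction rule: ffact_span.induct)
  case (ffact j)
  have "(\<lambda>x. x * ffact j x) = (\<lambda>x. ffact (Suc j) x + real j * ffact j x)"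
    by (auto simp: ffact.simps algebra_simps)
  then show ?case by (simp add: ffact_span.intros)
next
  case (add f g)
  have "(\<lambda>x. x * (f x + g x)) = (\<lambda>x. x * f x + x * g x)" by (auto simp: algebra_simps)
  then show ?case using add by (simp add: ffact_span.add)
next
  case (scale f c)
  have "(\<lambda>x. x * (c * f x)) = (\<lambda>x. c * (x * f x))" by (auto simp: algebra_simps)
  then show ?case using scale by (simp add: ffact_span.scale)
qed

lemma power_in_ffact_span: "(\<lambda>x. (x - c) ^ m) \<in> ffact_span"
proof (induction m)
  case 0
  have "(\<lambda>x::real. (x - c) ^ 0) = ffact 0" by auto
  then show ?case using ffact_span.ffact[of 0] by simp
next
  case (Suc m)
  have eq: "(\<lambda>x. (x - c) ^ Suc m) = (\<lambda>x. x * (x - c) ^ m + (- c) * (x - c) ^ m)"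
    by (auto simp: algebra_simps)
  show ?case
    unfolding eq by (rule ffact_span.add[OF ffact_span_mult_x[OF Suc] ffact_span.scale[OF Suc]])
qed

section \<open>A recurrence for the central moments\<close>

lemma expect_add: "expect n (\<lambda>t. f t + g t) = expect n f + expect n g"
  by (simp add: expect_def sum.distrib add_divide_distrib)

lemma expect_diff: "expect n (\<lambda>t. f t - g t) = expect n f - expect n g"
  by (simp add: expect_def sum_subtractf diff_divide_distrib)

lemma expect_cmult: "expect n (\<lambda>t. c * f t) = c * expect n f"
  by (simp add: expect_def sum_distrib_left)

lemma expect_sum: "expect n (\<lambda>t. \<Sum>i\<in>I. f i t) = (\<Sum>i\<in>I. expect n (f i))"
  by (simp add: expect_def sum_divide_distrib sum.swap[of _ I])

definition moment :: "nat \<Rightarrow> nat \<Rightarrow> real" where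
  "moment n i = expect n (\<lambda>t. (real (cherries t) - real n / 4) ^ i)"

definition signed_choose :: "nat \<Rightarrow> nat \<Rightarrow> real" where
  "signed_choose m i = real (m choose i) * (-1) ^ (m - i)"

lemma signed_choose_Suc_self: "signed_choose (Suc k) k = - real (Suc k)"
  by (simp add: signed_choose_def)

lemma signed_choose_Suc_Suc_self: "signed_choose (Suc (Suc k)) k = real (Suc (Suc k)) * real (Suc k) / 2"
proof -
  have "real (Suc (Suc k) choose k) * 2 = real (Suc (Suc k)) * real (Suc k)"
  proof (induction k)
    case (Suc k)
    then show ?case
      by (simp add: algebra_simps)
  qed simp
  then show ?thesis by (simp add: signed_choose_def)
qed

lemma power_diff_1_expand: "(x - 1) ^ m = (\<Sum>i\<le>m. signed_choose m i * x ^ i)"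
  using binomial_ring[of x "-1::real" m] by (simp add: signed_choose_def algebra_simps)

lemma stein_summand_centered:
  fixes k n d y z :: real
  assumes "k = d + n / 4"
  shows "4 * (4 * k * (k - 1) * y - (n - 2 * k) * (n - 2 * k - 1) * z)
    = (n^2 - 4*n) * y + (8*n - 16) * (d * y) + 16 * (d^2 * y)
      - (n^2 - 2*n) * z - (8 - 8*n) * (d * z) - 16 * (d^2 * z)"
  unfolding assms by (simp add: field_simps power2_eq_square)

lemma moment_identity:
  "(real n^2 - 4*real n) * (\<Sum>i\<le>m. signed_choose m i * moment n i)
   + (8*real n - 16) * (\<Sum>i\<le>m. signed_choose m i * moment n (i+1))
   + 16 * (\<Sum>i\<le>m. signed_choose m i * moment n (i+2))
   - (real n^2 - 2*real n) * moment n m - (8 - 8*real n) * moment n (m+1) - 16 * moment n (m+2) = 0"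
proof -
  let ?D = "\<lambda>t. real (cherries t) - real n / 4"
  let ?P = "\<lambda>a t. \<Sum>i\<le>m. signed_choose m i * ?D t ^ (i + a)"
  have "0 = 4 * stein n (\<lambda>x. (x - real n / 4) ^ m) / real (ntrees n)"
    using stein_ffact_span[OF power_in_ffact_span] by simp
  also have "\<dots> = expect n (\<lambda>t. (real n^2 - 4*real n) * ?P 0 t + (8*real n - 16) * ?P 1 t
      + 16 * ?P 2 t - (real n^2 - 2*real n) * ?D t ^ m - (8 - 8*real n) * ?D t ^ (m+1)
      - 16 * ?D t ^ (m+2))"
    unfolding stein_def expect_def sum_distrib_left[of 4]
  proof (rule arg_cong[where f = "\<lambda>x. x / real (ntrees n)"], rule sum.cong[OF refl])
    fix t
    have "real (cherries t) - 1 - real n / 4 = ?D t - 1" by simp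
    then show "4 * (4 * real (cherries t) * (real (cherries t) - 1) * (real (cherries t) - 1 - real n / 4) ^ m
        - (real n - 2 * real (cherries t)) * (real n - 2 * real (cherries t) - 1) * ?D t ^ m)
      = (real n^2 - 4*real n) * ?P 0 t + (8*real n - 16) * ?P 1 t + 16 * ?P 2 t
        - (real n^2 - 2*real n) * ?D t ^ m - (8 - 8*real n) * ?D t ^ (m+1) - 16 * ?D t ^ (m+2)"
      by (simp only: stein_summand_centered[of _ "?D t"] power_diff_1_expand)
        (simp add: sum_distrib_left power_add power2_eq_square mult_ac)
  qed
  also have "\<dots> = (real n^2 - 4*real n) * (\<Sum>i\<le>m. signed_choose m i * moment n i)
   + (8*real n - 16) * (\<Sum>i\<le>m. signed_choose m i * moment n (i+1))
   + 16 * (\<Sum>i\<le>m. signed_choose m i * moment n (i+2))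
   - (real n^2 - 2*real n) * moment n m - (8 - 8*real n) * moment n (m+1) - 16 * moment n (m+2)"
    by (simp add: expect_add expect_diff expect_cmult expect_sum moment_def)
  finally show ?thesis by simp
qed

lemma moment_recurrence:
  "(16*real n - 16*real m - 24) * moment n (m+1)
    = 2*real n * moment n m - (real n^2 - 4*real n) * (\<Sum>i<m. signed_choose m i * moment n i)
      - (8*real n - 16) * (\<Sum>i<m. signed_choose m i * moment n (i+1))
      - 16 * (\<Sum>i<m-1. signed_choose m i * moment n (i+2))"
proof -
  have split: "(\<Sum>i\<le>m. g i) = (\<Sum>i<m. g i) + g m" for g :: "nat \<Rightarrow> real"
    by (simp add: lessThan_Suc_atMost[symmetric])
  have last: "(\<Sum>i<m. signed_choose m i * moment n (i+2))
      = - real m * moment n (m+1) + (\<Sum>i<m-1. signed_choose m i * moment n (i+2))"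
  proof (cases m)
    case (Suc k)
    then show ?thesis by (simp add: signed_choose_Suc_self add.commute)
  qed simp
  show ?thesis
    using moment_identity[of n m] unfolding split last by (simp add: signed_choose_def[of m m] algebra_simps)
qed

lemma moment_0: "n \<ge> 1 \<Longrightarrow> moment n 0 = 1"
  using ntrees_pos[of n] by (simp add: moment_def expect_def)

section \<open>Asymptotics of the central moments\<close>

definition scaled_moment :: "nat \<Rightarrow> nat \<Rightarrow> real" where
  "scaled_moment i n = moment n i / real n ^ (i div 2)"

lemma tendsto_power_ratio_0: "a < e \<Longrightarrow> (\<lambda>n. real n ^ a / real n ^ e) \<longlonglongrightarrow> 0"
proof -
  assume ae: "a < e"
  have "(\<lambda>n. inverse (real n ^ (e - a))) \<longlonglongrightarrow> 0"
    using ae by (intro tendsto_inverse_0_at_top filterlim_pow_at_top filterlim_real_sequentially) auto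
  moreover have "\<forall>\<^sub>F n in sequentially. inverse (real n ^ (e - a)) = real n ^ a / real n ^ e"
    using eventually_gt_at_top[of 0]
  proof eventually_elim
    case (elim n)
    have "real n ^ e = real n ^ a * real n ^ (e - a)"
      using ae by (simp flip: power_add)
    then show ?case using elim by (simp add: field_simps)
  qed
  ultimately show ?thesis by (rule Lim_transform_eventually)
qed

lemma moment_over_power_tendsto_0:
  assumes "convergent (scaled_moment j)" "j div 2 < e"
  shows "(\<lambda>n. moment n j / real n ^ e) \<longlonglongrightarrow> 0"
proof -
  obtain L where L: "scaled_moment j \<longlonglongrightarrow> L"
    using assms(1) by (auto simp: convergent_def)
  have "(\<lambda>n. scaled_moment j n * (real n ^ (j div 2) / real n ^ e)) \<longlonglongrightarrow> L * 0"
    by (intro tendsto_mult L tendsto_power_ratio_0 assms(2))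
  moreover have "\<forall>\<^sub>F n in sequentially. scaled_moment j n * (real n ^ (j div 2) / real n ^ e) = moment n j / real n ^ e"
    using eventually_gt_at_top[of 0] by eventually_elim (simp add: scaled_moment_def)
  ultimately show ?thesis by (auto intro: Lim_transform_eventually)
qed

lemma moment_over_power_tendsto:
  "scaled_moment j \<longlonglongrightarrow> L \<Longrightarrow> j div 2 = e \<Longrightarrow> (\<lambda>n. moment n j / real n ^ e) \<longlonglongrightarrow> L"
  by (simp add: scaled_moment_def[abs_def])

lemma moment_sum_over_power_tendsto_0:
  assumes "finite I" "\<And>i. i \<in> I \<Longrightarrow> convergent (scaled_moment (g i)) \<and> g i div 2 < e"
  shows "(\<lambda>n. (\<Sum>i\<in>I. c i * moment n (g i)) / real n ^ e) \<longlonglongrightarrow> 0"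
proof -
  have "(\<lambda>n. \<Sum>i\<in>I. c i * (moment n (g i) / real n ^ e)) \<longlonglongrightarrow> 0"
    using assms(2) by (intro tendsto_null_sum tendsto_mult_right_zero moment_over_power_tendsto_0) auto
  then show ?thesis by (simp add: sum_divide_distrib)
qed

lemma scaled_moment_1: "scaled_moment 1 \<longlonglongrightarrow> 1/8"
proof -
  have "(\<lambda>n. 2 * real n / (16 * real n - 24)) \<longlonglongrightarrow> 1/8" by real_asymp
  moreover have "\<forall>\<^sub>F n in sequentially. 2 * real n / (16 * real n - 24) = scaled_moment 1 n"
    using eventually_ge_at_top[of 2]
  proof eventually_elim
    case (elim n)
    then have "(16 * real n - 24) * moment n 1 = 2 * real n" and "16 * real n - 24 \<noteq> 0"
      using moment_recurrence[of n 0] by (simp_all add: moment_0)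
    then show ?case by (simp add: scaled_moment_def field_simps)
  qed
  ultimately show ?thesis by (rule Lim_transform_eventually)
qed

lemma scaled_moment_Suc_eq:
  assumes r: "(m + 1) div 2 = r + 1" and n: "n > m + 2"
  shows "scaled_moment (m+1) n = (2 * (moment n m / real n ^ (r+1))
      - (1 - 4 / real n) * ((\<Sum>i<m. signed_choose m i * moment n i) / real n ^ r)
      - (8 - 16 / real n) * ((\<Sum>i<m. signed_choose m i * moment n (i+1)) / real n ^ (r+1))
      - 16 * ((\<Sum>i<m-1. signed_choose m i * moment n (i+2)) / real n ^ (r+2)))
      * (real n / (16 * real n - 16 * real m - 24))"
proof -
  define x where "x = real n"
  define den where "den = 16 * x - 16 * real m - 24"
  let ?B = "\<Sum>i<m. signed_choose m i * moment n i"
  let ?C = "\<Sum>i<m. signed_choose m i * moment n (i+1)"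
  let ?D = "\<Sum>i<m-1. signed_choose m i * moment n (i+2)"
  have x: "x > 0" and den: "den \<noteq> 0" using n by (simp_all add: x_def den_def)
  have pow: "x ^ (r+1) = x ^ r * x" "x ^ (r+2) = x ^ r * x * x" by simp_all
  have "2 * (moment n m / x ^ (r+1)) - (1 - 4 / x) * (?B / x ^ r) - (8 - 16 / x) * (?C / x ^ (r+1))
        - 16 * (?D / x ^ (r+2))
      = (2*x * moment n m - (x^2 - 4*x) * ?B - (8*x - 16) * ?C - 16 * ?D) / (x ^ r * x * x)"
    unfolding pow using x by (simp add: field_simps power2_eq_square)
  also have "\<dots> = den * moment n (m+1) / (x ^ r * x * x)"
    using moment_recurrence[of n m] by (simp add: den_def x_def)
  finally have eq: "2 * (moment n m / x ^ (r+1)) - (1 - 4 / x) * (?B / x ^ r)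
      - (8 - 16 / x) * (?C / x ^ (r+1)) - 16 * (?D / x ^ (r+2)) = den * moment n (m+1) / (x ^ r * x * x)" .
  have "scaled_moment (m+1) n = moment n (m+1) / (x ^ r * x)"
    using r by (simp add: scaled_moment_def x_def)
  then show ?thesis
    unfolding x_def[symmetric] den_def[symmetric] eq using x den by (simp add: field_simps)
qed

text \<open>In the recurrence for moment n (m+1), divided by n^(r+2), only the three leading
  contributions a, b, c survive; the fourth sum is always of lower order.\<close>
lemma scaled_moment_step:
  assumes conv: "\<And>j. j \<le> m \<Longrightarrow> convergent (scaled_moment j)"
    and r: "(m + 1) div 2 = r + 1"
    and A: "(\<lambda>n. moment n m / real n ^ (r+1)) \<longlonglongrightarrow> a"
    and B: "(\<lambda>n. (\<Sum>i<m. signed_choose m i * moment n i) / real n ^ r) \<longlonglongrightarrow> b"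
    and C: "(\<lambda>n. (\<Sum>i<m. signed_choose m i * moment n (i+1)) / real n ^ (r+1)) \<longlonglongrightarrow> c"
  shows "scaled_moment (m+1) \<longlonglongrightarrow> (2*a - b - 8*c) / 16"
proof -
  define D where "D n = (\<Sum>i<m-1. signed_choose m i * moment n (i+2))" for n
  have D: "(\<lambda>n. D n / real n ^ (r+2)) \<longlonglongrightarrow> 0"
    unfolding D_def using r by (intro moment_sum_over_power_tendsto_0 conjI conv) auto
  have l1: "(\<lambda>n. 1 - 4 / real n) \<longlonglongrightarrow> 1" and l2: "(\<lambda>n. 8 - 16 / real n) \<longlonglongrightarrow> 8"
    and l3: "(\<lambda>n. real n / (16 * real n - 16 * real m - 24)) \<longlonglongrightarrow> 1/16"
    by real_asymp+
  have "(\<lambda>n. (2 * (moment n m / real n ^ (r+1))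
      - (1 - 4 / real n) * ((\<Sum>i<m. signed_choose m i * moment n i) / real n ^ r)
      - (8 - 16 / real n) * ((\<Sum>i<m. signed_choose m i * moment n (i+1)) / real n ^ (r+1))
      - 16 * (D n / real n ^ (r+2))) * (real n / (16 * real n - 16 * real m - 24)))
    \<longlonglongrightarrow> (2 * a - 1 * b - 8 * c - 16 * 0) * (1/16)"
    by (intro tendsto_mult[OF _ l3] tendsto_diff tendsto_mult[OF tendsto_const] tendsto_mult[OF l1]
        tendsto_mult[OF l2] A B C D)
  moreover have "\<forall>\<^sub>F n in sequentially. (2 * (moment n m / real n ^ (r+1))
      - (1 - 4 / real n) * ((\<Sum>i<m. signed_choose m i * moment n i) / real n ^ r)
      - (8 - 16 / real n) * ((\<Sum>i<m. signed_choose m i * moment n (i+1)) / real n ^ (r+1))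
      - 16 * (D n / real n ^ (r+2))) * (real n / (16 * real n - 16 * real m - 24))
    = scaled_moment (m+1) n"
    using eventually_gt_at_top[of "m+2"]
    by eventually_elim (simp only: D_def scaled_moment_Suc_eq[OF r])
  ultimately show ?thesis by (auto intro: Lim_transform_eventually)
qed

lemma scaled_moment_even_step:
  assumes conv: "\<And>j. j \<le> 2*r+1 \<Longrightarrow> convergent (scaled_moment j)"
    and L: "scaled_moment (2*r) \<longlonglongrightarrow> L"
  shows "scaled_moment (2*r+2) \<longlonglongrightarrow> (2*real r + 1) * L / 16"
proof -
  let ?m = "2*r+1" and ?s = "signed_choose (2*r+1)"
  have A: "(\<lambda>n. moment n ?m / real n ^ (r+1)) \<longlonglongrightarrow> 0"
    by (rule moment_over_power_tendsto_0) (auto intro: conv)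
  have "(\<lambda>n. (\<Sum>i<2*r. ?s i * moment n i) / real n ^ r + ?s (2*r) * (moment n (2*r) / real n ^ r))
      \<longlonglongrightarrow> 0 + ?s (2*r) * L"
    by (intro tendsto_add tendsto_mult_left moment_sum_over_power_tendsto_0 moment_over_power_tendsto[OF L])
      (auto intro: conv)
  then have B: "(\<lambda>n. (\<Sum>i<?m. ?s i * moment n i) / real n ^ r) \<longlonglongrightarrow> 0 + ?s (2*r) * L"
    by (simp add: add_divide_distrib)
  have C: "(\<lambda>n. (\<Sum>i<?m. ?s i * moment n (i+1)) / real n ^ (r+1)) \<longlonglongrightarrow> 0"
    by (rule moment_sum_over_power_tendsto_0) (auto intro: conv)
  have "scaled_moment (?m+1) \<longlonglongrightarrow> (2*0 - (0 + ?s (2*r) * L) - 8*0) / 16"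
    by (rule scaled_moment_step[OF conv _ A B C]) auto
  moreover have "?s (2*r) = - (2*real r + 1)"
    using signed_choose_Suc_self[of "2*r"] by simp
  moreover have "2*r+2 = ?m+1" by simp
  ultimately show ?thesis by (simp only:) (simp add: algebra_simps)
qed

lemma scaled_moment_odd_step:
  assumes conv: "\<And>j. j \<le> 2*r+2 \<Longrightarrow> convergent (scaled_moment j)"
    and L0: "scaled_moment (2*r) \<longlonglongrightarrow> L0" and L1: "scaled_moment (2*r+1) \<longlonglongrightarrow> L1"
    and L2: "scaled_moment (2*r+2) \<longlonglongrightarrow> L2"
  shows "scaled_moment (2*r+3) \<longlonglongrightarrow>
    (2 * L2 - (real r + 1) * (2*real r + 1) * L0 + (2*real r + 2) * L1 + 8 * (2*real r + 2) * L2) / 16"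
proof -
  let ?m = "2*r+2" and ?s = "signed_choose (2*r+2)"
  have A: "(\<lambda>n. moment n ?m / real n ^ (r+1)) \<longlonglongrightarrow> L2"
    by (rule moment_over_power_tendsto[OF L2]) simp
  have "(\<lambda>n. (\<Sum>i<2*r. ?s i * moment n i) / real n ^ r + ?s (2*r) * (moment n (2*r) / real n ^ r)
      + ?s (2*r+1) * (moment n (2*r+1) / real n ^ r)) \<longlonglongrightarrow> 0 + ?s (2*r) * L0 + ?s (2*r+1) * L1"
    by (intro tendsto_add tendsto_mult_left moment_sum_over_power_tendsto_0
        moment_over_power_tendsto[OF L0] moment_over_power_tendsto[OF L1]) (auto intro: conv)
  then have B: "(\<lambda>n. (\<Sum>i<?m. ?s i * moment n i) / real n ^ r)
      \<longlonglongrightarrow> 0 + ?s (2*r) * L0 + ?s (2*r+1) * L1"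
    by (simp add: add_divide_distrib)
  have "(\<lambda>n. (\<Sum>i<2*r+1. ?s i * moment n (i+1)) / real n ^ (r+1)
      + ?s (2*r+1) * (moment n (2*r+2) / real n ^ (r+1))) \<longlonglongrightarrow> 0 + ?s (2*r+1) * L2"
    by (intro tendsto_add tendsto_mult_left moment_sum_over_power_tendsto_0
        moment_over_power_tendsto[OF L2]) (auto intro: conv)
  then have C: "(\<lambda>n. (\<Sum>i<?m. ?s i * moment n (i+1)) / real n ^ (r+1)) \<longlonglongrightarrow> 0 + ?s (2*r+1) * L2"
    by (simp add: add_divide_distrib)
  have "scaled_moment (?m+1) \<longlonglongrightarrow> (2*L2 - (0 + ?s (2*r) * L0 + ?s (2*r+1) * L1) - 8*(0 + ?s (2*r+1) * L2)) / 16"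
    by (rule scaled_moment_step[OF conv _ A B C]) auto
  moreover have "?s (2*r+1) = - (2*real r + 2)" "?s (2*r) = (real r + 1) * (2*real r + 1)"
    using signed_choose_Suc_self[of "2*r+1"] signed_choose_Suc_Suc_self[of "2*r"] by (simp_all add: algebra_simps)
  moreover have "2*r+3 = ?m+1" by simp
  ultimately show ?thesis by (simp only:) (simp add: algebra_simps)
qed

lemma dfact_pos: "dfact k > 0"
  by (induction k rule: dfact.induct) auto

lemma dfact_odd: "dfact (2*r+1) = (2*r+1) * dfact (2*r - 1)"
proof (cases r)
  case (Suc k)
  then have "2*r+1 = Suc (Suc (2*k+1))" "2*r - 1 = 2*k+1" by auto
  then show ?thesis by simp
qed simp

lemma scaled_moment_0: "scaled_moment 0 \<longlonglongrightarrow> 1"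
proof -
  have "\<forall>\<^sub>F n in sequentially. 1 = scaled_moment 0 n"
    using eventually_ge_at_top[of 1] by eventually_elim (simp add: scaled_moment_def moment_0)
  then show ?thesis by (rule Lim_transform_eventually[OF tendsto_const])
qed

lemma scaled_moment_even_limit:
  assumes "\<And>j. j \<le> 2*r+1 \<Longrightarrow> convergent (scaled_moment j)"
    and "scaled_moment (2*r) \<longlonglongrightarrow> real (dfact (2*r - 1)) / 16 ^ r"
  shows "scaled_moment (2*r+2) \<longlonglongrightarrow> real (dfact (2*r+1)) / 16 ^ Suc r"
proof -
  have "scaled_moment (2*r+2) \<longlonglongrightarrow> (2*real r + 1) * (real (dfact (2*r - 1)) / 16 ^ r) / 16"
    by (rule scaled_moment_even_step[OF assms])
  moreover have "(2*real r + 1) * (real (dfact (2*r - 1)) / 16 ^ r) / 16 = real (dfact (2*r+1)) / 16 ^ Suc r"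
    unfolding dfact_odd by (simp add: algebra_simps)
  ultimately show ?thesis by (simp only:)
qed

lemma scaled_moment_odd_limit:
  assumes "\<And>j. j \<le> 2*r+2 \<Longrightarrow> convergent (scaled_moment j)"
    and "scaled_moment (2*r) \<longlonglongrightarrow> y / 16 ^ r"
    and "scaled_moment (2*r+1) \<longlonglongrightarrow> (2*real r + 1) * y / (8 * 16 ^ r)"
    and "scaled_moment (2*r+2) \<longlonglongrightarrow> (2*real r + 1) * y / 16 ^ Suc r"
  shows "scaled_moment (2*r+3) \<longlonglongrightarrow> (2*real r + 3) * ((2*real r + 1) * y) / (8 * 16 ^ Suc r)"
proof -
  have "scaled_moment (2*r+3) \<longlonglongrightarrow> (2 * ((2*real r + 1) * y / 16 ^ Suc r)
      - (real r + 1) * (2*real r + 1) * (y / 16 ^ r) + (2*real r + 2) * ((2*real r + 1) * y / (8 * 16 ^ r))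
      + 8 * (2*real r + 2) * ((2*real r + 1) * y / 16 ^ Suc r)) / 16"
    by (rule scaled_moment_odd_step[OF assms])
  moreover have "(2 * ((2*real r + 1) * y / 16 ^ Suc r)
      - (real r + 1) * (2*real r + 1) * (y / 16 ^ r) + (2*real r + 2) * ((2*real r + 1) * y / (8 * 16 ^ r))
      + 8 * (2*real r + 2) * ((2*real r + 1) * y / 16 ^ Suc r)) / 16
      = (2*real r + 3) * ((2*real r + 1) * y) / (8 * 16 ^ Suc r)"
    by (simp add: field_simps)
  ultimately show ?thesis by (simp only:)
qed

lemma scaled_moment_limits:
  "scaled_moment (2*s) \<longlonglongrightarrow> real (dfact (2*s - 1)) / 16 ^ s
   \<and> scaled_moment (2*s+1) \<longlonglongrightarrow> real (dfact (2*s+1)) / (8 * 16 ^ s)"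
proof (induction s rule: less_induct)
  case (less s)
  have conv: "convergent (scaled_moment j)" if "j < 2*s" for j
  proof -
    have "j = 2*(j div 2) \<or> j = 2*(j div 2) + 1" by presburger
    moreover have "j div 2 < s" using that by simp
    ultimately show ?thesis using less.IH[of "j div 2"] convergentI by metis
  qed
  show ?case
  proof (cases s)
    case 0
    then show ?thesis using scaled_moment_0 scaled_moment_1 by simp
  next
    case (Suc r)
    define y where "y = real (dfact (2*r - 1))"
    have d: "real (dfact (2*r+1)) = (2*real r + 1) * y"
      unfolding y_def dfact_odd by (simp add: algebra_simps)
    have L0: "scaled_moment (2*r) \<longlonglongrightarrow> y / 16 ^ r"
      and L1: "scaled_moment (2*r+1) \<longlonglongrightarrow> (2*real r + 1) * y / (8 * 16 ^ r)"
      using less.IH[of r] Suc unfolding y_def[symmetric] d by simp_all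
    have L2: "scaled_moment (2*r+2) \<longlonglongrightarrow> (2*real r + 1) * y / 16 ^ Suc r"
      using scaled_moment_even_limit[of r] conv L0 Suc unfolding y_def d by simp
    have "convergent (scaled_moment j)" if "j \<le> 2*r+2" for j
      using that conv[of j] convergentI[OF L2] Suc by (cases "j = 2*r+2") simp_all
    from scaled_moment_odd_limit[OF this L0 L1 L2]
    have L3: "scaled_moment (2*r+3) \<longlonglongrightarrow> (2*real r + 3) * ((2*real r + 1) * y) / (8 * 16 ^ Suc r)" .
    have "2*r+3 = Suc (Suc (2*r+1))" by simp
    then have "dfact (2*r+3) = (2*r+3) * dfact (2*r+1)"
      by (simp only: dfact.simps(3))
    then have d3: "real (dfact (2*r+3)) = (2*real r + 3) * ((2*real r + 1) * y)"
      by (simp only: of_nat_mult d) simp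
    have "2*s - 1 = 2*r+1" "2*s = 2*r+2" "2*s+1 = 2*r+3" "(16::real) ^ s = 16 ^ Suc r"
      using Suc by simp_all
    then show ?thesis
      using L2 L3 by (simp only: d d3)
  qed
qed

lemma convergent_scaled_moment: "convergent (scaled_moment j)"
proof -
  have "j = 2*(j div 2) \<or> j = 2*(j div 2) + 1" by presburger
  then show ?thesis using scaled_moment_limits[of "j div 2"] unfolding convergent_def by metis
qed

section \<open>Mixed moments\<close>

lemma expect_S2_power_moment:
  "expect n (\<lambda>t. real (S2 t) ^ l * (real (S2 t) - real n / 4) ^ k)
    = (\<Sum>i\<le>l. real (l choose i) * (real n / 4) ^ (l - i) * moment n (k + i))"
proof -
  have "real (S2 t) ^ l * (real (S2 t) - real n / 4) ^ k
      = (\<Sum>i\<le>l. real (l choose i) * (real n / 4) ^ (l - i) * (real (cherries t) - real n / 4) ^ (k + i))"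
    for t
  proof -
    have "real (S2 t) ^ l = ((real (cherries t) - real n / 4) + real n / 4) ^ l"
      by (simp add: S2_eq_cherries)
    also have "\<dots> = (\<Sum>i\<le>l. real (l choose i) * (real (cherries t) - real n / 4) ^ i * (real n / 4) ^ (l - i))"
      by (rule binomial_ring)
    finally show ?thesis
      by (simp add: S2_eq_cherries sum_distrib_left sum_distrib_right power_add mult_ac)
  qed
  then show ?thesis
    by (simp add: expect_sum expect_cmult moment_def)
qed

lemma expect_S2_power_scaled_tendsto:
  assumes lim: "\<And>i. i \<le> l \<Longrightarrow> (\<lambda>n. moment n (k + i) / real n ^ (s + i)) \<longlonglongrightarrow> c i"
  shows "(\<lambda>n. expect n (\<lambda>t. real (S2 t) ^ l * (real (S2 t) - real n / 4) ^ k) / ((real n / 4) ^ l * real n ^ s))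
     \<longlonglongrightarrow> (\<Sum>i\<le>l. real (l choose i) * 4 ^ i * c i)"
proof -
  have "(\<lambda>n. \<Sum>i\<le>l. real (l choose i) * 4 ^ i * (moment n (k + i) / real n ^ (s + i)))
      \<longlonglongrightarrow> (\<Sum>i\<le>l. real (l choose i) * 4 ^ i * c i)"
    by (intro tendsto_sum tendsto_mult_left lim) auto
  moreover have "\<forall>\<^sub>F n in sequentially. (\<Sum>i\<le>l. real (l choose i) * 4 ^ i * (moment n (k + i) / real n ^ (s + i)))
      = expect n (\<lambda>t. real (S2 t) ^ l * (real (S2 t) - real n / 4) ^ k) / ((real n / 4) ^ l * real n ^ s)"
    using eventually_gt_at_top[of 0]
  proof eventually_elim
    case (elim n)
    have "real (l choose i) * (real n / 4) ^ (l - i) * moment n (k + i) / ((real n / 4) ^ l * real n ^ s)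
        = real (l choose i) * 4 ^ i * (moment n (k + i) / real n ^ (s + i))" if "i \<le> l" for i
    proof -
      have "(real n / 4) ^ l = (real n / 4) ^ (l - i) * (real n / 4) ^ i"
        using that by (simp flip: power_add)
      then show ?thesis using elim by (simp add: field_simps power_add power_divide)
    qed
    then show ?case
      by (simp add: expect_S2_power_moment sum_divide_distrib)
  qed
  ultimately show ?thesis by (rule Lim_transform_eventually)
qed

lemma asymp_equiv_of_scaled_tendsto:
  fixes f g :: "nat \<Rightarrow> real"
  assumes "(\<lambda>n. f n / g n) \<longlonglongrightarrow> K" "K \<noteq> 0"
  shows "f \<sim>[at_top] (\<lambda>n. K * g n)"
proof (rule asymp_equivI')
  have "(\<lambda>n. f n / g n / K) \<longlonglongrightarrow> K / K"
    by (intro tendsto_divide assms tendsto_const)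
  then show "(\<lambda>n. f n / (K * g n)) \<longlonglongrightarrow> 1"
    using assms(2) by (simp add: field_simps)
qed

lemma expect_S2_even_asymp:
  "(\<lambda>n. expect n (\<lambda>t. real (S2 t) ^ l * (real (S2 t) - real n / 4) ^ (2 * s)))
     \<sim>[at_top] (\<lambda>n. (real n / 4) ^ l * (real (dfact (2 * s - 1)) / 4 ^ (2 * s)) * real n ^ s)"
proof -
  let ?c = "real (dfact (2 * s - 1)) / 4 ^ (2 * s)"
  have lim: "(\<lambda>n. moment n (2*s + i) / real n ^ (s + i)) \<longlonglongrightarrow> (if i = 0 then ?c else 0)" for i
  proof (cases "i = 0")
    case True
    then show ?thesis
      using scaled_moment_limits[of s] by (auto intro: moment_over_power_tendsto simp: power_mult)
  next
    case False
    then show ?thesis by (simp add: moment_over_power_tendsto_0[OF convergent_scaled_moment])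
  qed
  have "(\<lambda>n. expect n (\<lambda>t. real (S2 t) ^ l * (real (S2 t) - real n / 4) ^ (2 * s))
      / ((real n / 4) ^ l * real n ^ s)) \<longlonglongrightarrow> ?c"
    using expect_S2_power_scaled_tendsto[OF lim] by (simp add: if_distrib[of "\<lambda>x. _ * x"] cong: if_cong)
  then have "(\<lambda>n. expect n (\<lambda>t. real (S2 t) ^ l * (real (S2 t) - real n / 4) ^ (2 * s)))
      \<sim>[at_top] (\<lambda>n. ?c * ((real n / 4) ^ l * real n ^ s))"
    by (rule asymp_equiv_of_scaled_tendsto) (simp add: dfact_pos)
  then show ?thesis by (simp add: mult_ac)
qed

lemma expect_S2_odd_asymp:
  "(\<lambda>n. expect n (\<lambda>t. real (S2 t) ^ l * (real (S2 t) - real n / 4) ^ (2 * s + 1)))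
     \<sim>[at_top] (\<lambda>n. (real n / 4) ^ l * (real (dfact (2 * s + 1)) / (2 * 4 ^ (2 * s + 1)))
                      * (2 * real l + 1) * real n ^ s)"
proof -
  let ?d = "real (dfact (2*s + 1)) / (8 * 16 ^ s)" and ?c = "real (dfact (2*s + 1)) / 16 ^ Suc s"
  have lim: "(\<lambda>n. moment n (2*s + 1 + i) / real n ^ (s + i))
      \<longlonglongrightarrow> (if i = 0 then ?d else if i = 1 then ?c else 0)" for i
  proof -
    consider "i = 0" | "i = 1" | "i \<ge> 2" by linarith
    then show ?thesis
    proof cases
      case 1
      then show ?thesis using scaled_moment_limits[of s] by (auto intro: moment_over_power_tendsto)
    next
      case 2
      have "(\<lambda>n. moment n (2*s + 2) / real n ^ (s + 1)) \<longlonglongrightarrow> ?c"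
        by (rule moment_over_power_tendsto) (use scaled_moment_limits[of "Suc s"] in simp_all)
      then show ?thesis using 2 by simp
    next
      case 3
      then have "(2*s + 1 + i) div 2 < s + i" by linarith
      then show ?thesis using 3 by (simp add: moment_over_power_tendsto_0[OF convergent_scaled_moment])
    qed
  qed
  have "(\<Sum>i\<le>l. real (l choose i) * 4 ^ i * (if i = 0 then ?d else if i = 1 then ?c else 0))
      = (\<Sum>i\<le>l. (if i = 0 then ?d else 0) + (if i = 1 then real l * 4 * ?c else 0))"
    by (intro sum.cong refl) auto
  also have "\<dots> = real (dfact (2 * s + 1)) / (2 * 4 ^ (2 * s + 1)) * (2 * real l + 1)"
    using power_mult[of "4::real" 2 s] by (cases l) (simp_all add: sum.distrib field_simps)
  finally have K: "(\<Sum>i\<le>l. real (l choose i) * 4 ^ i * (if i = 0 then ?d else if i = 1 then ?c else 0))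
      = real (dfact (2 * s + 1)) / (2 * 4 ^ (2 * s + 1)) * (2 * real l + 1)" .
  have "(\<lambda>n. expect n (\<lambda>t. real (S2 t) ^ l * (real (S2 t) - real n / 4) ^ (2 * s + 1))
      / ((real n / 4) ^ l * real n ^ s)) \<longlonglongrightarrow> real (dfact (2 * s + 1)) / (2 * 4 ^ (2 * s + 1)) * (2 * real l + 1)"
    using expect_S2_power_scaled_tendsto[OF lim, where l = l] unfolding K .
  then have "(\<lambda>n. expect n (\<lambda>t. real (S2 t) ^ l * (real (S2 t) - real n / 4) ^ (2 * s + 1)))
      \<sim>[at_top] (\<lambda>n. real (dfact (2 * s + 1)) / (2 * 4 ^ (2 * s + 1)) * (2 * real l + 1)
                       * ((real n / 4) ^ l * real n ^ s))"
    by (rule asymp_equiv_of_scaled_tendsto) (simp add: dfact_pos)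
  then show ?thesis by (simp add: mult_ac)
qed

theorem lemma4:
  fixes s l :: nat
  shows "(\<lambda>n. expect n (\<lambda>t. real (S2 t) ^ l * (real (S2 t) - real n / 4) ^ (2 * s)))
           \<sim>[at_top] (\<lambda>n. (real n / 4) ^ l * (real (dfact (2 * s - 1)) / 4 ^ (2 * s)) * real n ^ s)
       \<and> (\<lambda>n. expect n (\<lambda>t. real (S2 t) ^ l * (real (S2 t) - real n / 4) ^ (2 * s + 1)))
           \<sim>[at_top] (\<lambda>n. (real n / 4) ^ l * (real (dfact (2 * s + 1)) / (2 * 4 ^ (2 * s + 1)))
                            * (2 * real l + 1) * real n ^ s)"
  using expect_S2_even_asymp expect_S2_odd_asymp ..

end
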